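(* Let $N,m>0$ be integers and let $u_1,\dots,u_m\in\overline{\mathbb F}_q$ (an algebraic closure of $\mathbb F_q$) be such that their minimal polynomials over $\mathbb F_q$ are pairwise distinct. Let $k_i=[\mathbb F_q(u_i):\mathbb F_q]$ and let $A(u_i)\in M_{k_i\times N}(\mathbb F_q)$ be the matrix defined by $[u_i^0,u_i^1,\dots,u_i^{N-1}]=[u_i^0,\dots,u_i^{k_i-1}]A(u_i)$. Then the $(k_1+\cdots+k_m)\times N$ matrix obtained by stacking $A(u_1),\dots,A(u_m)$ vertically has rank $\min\{k_1+\cdots+k_m,\,N\}$. *)

theory Defs
  imports "HOL-Algebra.Algebraic_Closure" "HOL-Algebra.Generated_Fields"
begin

definition rows_indep_over ::
  "('a, 'b) ring_scheme \<Rightarrow> 'a set \<Rightarrow> 'r set \<Rightarrow> nat \<Rightarrow> ('r \<Rightarrow> nat \<Rightarrow> 'a) \<Rightarrow> bool" where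
  "rows_indep_over R K I N M \<longleftrightarrow>
     (\<forall>c. (\<forall>i\<in>I. c i \<in> K) \<longrightarrow>
          (\<forall>l<N. finsum R (\<lambda>i. c i \<otimes>\<^bsub>R\<^esub> M i l) I = \<zero>\<^bsub>R\<^esub>) \<longrightarrow>
          (\<forall>i\<in>I. c i = \<zero>\<^bsub>R\<^esub>))"

definition mat_rank_over ::
  "('a, 'b) ring_scheme \<Rightarrow> 'a set \<Rightarrow> 'r set \<Rightarrow> nat \<Rightarrow> ('r \<Rightarrow> nat \<Rightarrow> 'a) \<Rightarrow> nat" where
  "mat_rank_over R K Rows N M =
     Max {card I | I. I \<subseteq> Rows \<and> rows_indep_over R K I N M}"

end

theory Submission
  imports Defs
begin

text \<open>
  A relation d between the first s = min (k_1 + ... + k_m) N columns of the stacked matrix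
  is a polynomial P = d_0 + d_1 X + ... + d_(s-1) X^(s-1) whose value at u_i has all
  coordinates zero in the basis 1, u_i, ..., u_i^(k_i - 1), i.e. P vanishes at every u_i.
  Being divisible by the product of the pairwise distinct minimal polynomials, of degree
  k_1 + ... + k_m >= s > deg P, it is zero: the first s columns are independent. Since row
  rank is at least column rank (a column relation vanishing on a maximal independent set of
  rows vanishes on every row), some s rows are independent; and, by Gaussian elimination,
  more than N vectors of K^N are never independent.
\<close>

lemma (in abelian_monoid) finsum_swap:
  assumes "finite A" "finite B" "\<And>a b. a \<in> A \<Longrightarrow> b \<in> B \<Longrightarrow> f a b \<in> carrier G"
  shows "(\<Oplus>a\<in>A. \<Oplus>b\<in>B. f a b) = (\<Oplus>b\<in>B. \<Oplus>a\<in>A. f a b)"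
  using assms
proof (induction A rule: finite_induct)
  case (insert x A)
  then have "(\<Oplus>a\<in>insert x A. \<Oplus>b\<in>B. f a b) = (\<Oplus>b\<in>B. f x b) \<oplus> (\<Oplus>b\<in>B. \<Oplus>a\<in>A. f a b)"
    by (simp add: Pi_def)
  also have "\<dots> = (\<Oplus>b\<in>B. f x b \<oplus> (\<Oplus>a\<in>A. f a b))"
    using insert by (simp add: finsum_addf Pi_def)
  also have "\<dots> = (\<Oplus>b\<in>B. \<Oplus>a\<in>insert x A. f a b)"
    using insert by (intro finsum_cong') (auto simp: Pi_def)
  finally show ?case .
qed simp

lemma (in cring) finsum_bilinear_swap:
  assumes "finite I" "finite J" "\<And>i. i \<in> I \<Longrightarrow> c i \<in> carrier R" "\<And>j. j \<in> J \<Longrightarrow> d j \<in> carrier R"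
    and "\<And>i j. i \<in> I \<Longrightarrow> j \<in> J \<Longrightarrow> M i j \<in> carrier R"
  shows "(\<Oplus>j\<in>J. d j \<otimes> (\<Oplus>i\<in>I. c i \<otimes> M i j)) = (\<Oplus>i\<in>I. c i \<otimes> (\<Oplus>j\<in>J. d j \<otimes> M i j))"
proof -
  have "(\<Oplus>j\<in>J. d j \<otimes> (\<Oplus>i\<in>I. c i \<otimes> M i j)) = (\<Oplus>j\<in>J. \<Oplus>i\<in>I. c i \<otimes> (d j \<otimes> M i j))"
    using assms by (intro finsum_cong') (auto simp: finsum_rdistr Pi_def m_lcomm intro!: finsum_cong')
  also have "\<dots> = (\<Oplus>i\<in>I. \<Oplus>j\<in>J. c i \<otimes> (d j \<otimes> M i j))"
    using assms by (intro finsum_swap) auto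
  also have "\<dots> = (\<Oplus>i\<in>I. c i \<otimes> (\<Oplus>j\<in>J. d j \<otimes> M i j))"
    using assms by (intro finsum_cong') (auto simp: finsum_rdistr Pi_def)
  finally show ?thesis .
qed

lemma (in cring) finsum_pow_coordinates:
  fixes k s :: nat
  assumes x: "x \<in> carrier R"
    and coords: "\<And>l. l < s \<Longrightarrow> x [^] l = (\<Oplus>j\<in>{..<k}. A j l \<otimes> x [^] j)"
    and A: "\<And>j l. j < k \<Longrightarrow> l < s \<Longrightarrow> A j l \<in> carrier R"
    and d: "\<And>l. l < s \<Longrightarrow> d l \<in> carrier R"
  shows "(\<Oplus>l\<in>{..<s}. d l \<otimes> x [^] l) = (\<Oplus>j\<in>{..<k}. x [^] j \<otimes> (\<Oplus>l\<in>{..<s}. d l \<otimes> A j l))"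
proof -
  have "(\<Oplus>l\<in>{..<s}. d l \<otimes> x [^] l) = (\<Oplus>l\<in>{..<s}. d l \<otimes> (\<Oplus>j\<in>{..<k}. x [^] j \<otimes> A j l))"
  proof (intro finsum_cong')
    fix l assume "l \<in> {..<s}"
    then have "x [^] l = (\<Oplus>j\<in>{..<k}. A j l \<otimes> x [^] j)"
      by (simp add: coords)
    also have "\<dots> = (\<Oplus>j\<in>{..<k}. x [^] j \<otimes> A j l)"
      using x A \<open>l \<in> {..<s}\<close> by (intro finsum_cong') (auto intro: m_comm)
    finally show "d l \<otimes> x [^] l = d l \<otimes> (\<Oplus>j\<in>{..<k}. x [^] j \<otimes> A j l)"
      by simp
  qed (use x A d in \<open>auto intro!: finsum_closed\<close>)
  also have "\<dots> = (\<Oplus>j\<in>{..<k}. x [^] j \<otimes> (\<Oplus>l\<in>{..<s}. d l \<otimes> A j l))"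
    using x A d by (intro finsum_bilinear_swap) auto
  finally show ?thesis .
qed

lemma (in ring) finsum_in_subring:
  assumes "subring K R" "finite A" "\<And>a. a \<in> A \<Longrightarrow> f a \<in> K"
  shows "(\<Oplus>a\<in>A. f a) \<in> K"
  using assms(2,3)
proof (induction A rule: finite_induct)
  case (insert x A)
  with subringE[OF assms(1)] show ?case
    by (subst finsum_insert) (auto simp: Pi_def subset_iff)
qed (simp add: subringE(2)[OF assms(1)])

text \<open>One step of Gaussian elimination with pivot row i0: for a = M i0 y the matrix on the
  right has column y equal to zero, and a relation c between its rows lifts to a relation
  between the rows of M.\<close>

lemma (in cring) finsum_row_elimination:
  assumes I: "finite I" "i0 \<notin> I" and a: "a \<in> carrier R"
    and c: "\<And>i. i \<in> I \<Longrightarrow> c i \<in> carrier R"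
    and M: "\<And>i. i \<in> insert i0 I \<Longrightarrow> M i y \<in> carrier R" "\<And>i. i \<in> insert i0 I \<Longrightarrow> M i z \<in> carrier R"
  shows "(\<Oplus>i\<in>insert i0 I. ((\<lambda>i. c i \<otimes> a)(i0 := \<ominus> (\<Oplus>i\<in>I. c i \<otimes> M i y))) i \<otimes> M i z)
    = (\<Oplus>i\<in>I. c i \<otimes> (M i z \<otimes> a \<ominus> M i y \<otimes> M i0 z))"
proof -
  define S where "S = (\<Oplus>i\<in>I. c i \<otimes> M i y)"
  define T where "T = (\<Oplus>i\<in>I. c i \<otimes> M i z)"
  have ST: "S \<in> carrier R" "T \<in> carrier R"
    unfolding S_def T_def using I c M by (auto intro!: finsum_closed)
  have "(\<Oplus>i\<in>I. ((\<lambda>i. c i \<otimes> a)(i0 := \<ominus> S)) i \<otimes> M i z) = (\<Oplus>i\<in>I. (c i \<otimes> M i z) \<otimes> a)"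
    using I a c M by (intro finsum_cong') (auto simp: m_ac)
  then have "(\<Oplus>i\<in>insert i0 I. ((\<lambda>i. c i \<otimes> a)(i0 := \<ominus> S)) i \<otimes> M i z)
      = \<ominus> S \<otimes> M i0 z \<oplus> (\<Oplus>i\<in>I. (c i \<otimes> M i z) \<otimes> a)"
    using I a c M ST by (simp add: Pi_def)
  also have "(\<Oplus>i\<in>I. (c i \<otimes> M i z) \<otimes> a) = T \<otimes> a"
    unfolding T_def using I a c M by (simp add: finsum_ldistr Pi_def)
  also have "\<ominus> S \<otimes> M i0 z \<oplus> T \<otimes> a = T \<otimes> a \<oplus> S \<otimes> (\<ominus> M i0 z)"
    using a M ST by simp algebra
  also have "\<dots> = (\<Oplus>i\<in>I. (c i \<otimes> M i z) \<otimes> a \<oplus> (c i \<otimes> M i y) \<otimes> (\<ominus> M i0 z))"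
    unfolding T_def S_def using I a c M by (simp add: finsum_ldistr finsum_addf Pi_def)
  also have "\<dots> = (\<Oplus>i\<in>I. c i \<otimes> (M i z \<otimes> a \<ominus> M i y \<otimes> M i0 z))"
  proof (intro finsum_cong')
    fix i assume "i \<in> I"
    with a c M show "(c i \<otimes> M i z) \<otimes> a \<oplus> (c i \<otimes> M i y) \<otimes> (\<ominus> M i0 z) = c i \<otimes> (M i z \<otimes> a \<ominus> M i y \<otimes> M i0 z)"
      by simp algebra
  qed (use a c M in auto)
  finally show ?thesis unfolding S_def .
qed

text \<open>Unlike rows_indep_over, the columns may be indexed by any set; applied to the transposed
  matrix this also expresses independence of columns.\<close>

definition rows_independent ::
  "('a, 'b) ring_scheme \<Rightarrow> 'a set \<Rightarrow> 'r set \<Rightarrow> 'c set \<Rightarrow> ('r \<Rightarrow> 'c \<Rightarrow> 'a) \<Rightarrow> bool" where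
  "rows_independent R K I J M \<longleftrightarrow>
     (\<forall>c. (\<forall>i\<in>I. c i \<in> K) \<longrightarrow>
          (\<forall>j\<in>J. finsum R (\<lambda>i. c i \<otimes>\<^bsub>R\<^esub> M i j) I = \<zero>\<^bsub>R\<^esub>) \<longrightarrow>
          (\<forall>i\<in>I. c i = \<zero>\<^bsub>R\<^esub>))"

lemma rows_indep_over_iff_rows_independent:
  "rows_indep_over R K I N M \<longleftrightarrow> rows_independent R K I {..<N} M"
  by (simp add: rows_indep_over_def rows_independent_def Ball_def)

lemma rows_independent_mono_columns:
  "rows_independent R K I J M \<Longrightarrow> J \<subseteq> J' \<Longrightarrow> rows_independent R K I J' M"
  unfolding rows_independent_def by blast

lemma rows_independentD:
  "rows_independent R K I J M \<Longrightarrow> \<forall>i\<in>I. c i \<in> K \<Longrightarrow>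
     \<forall>j\<in>J. finsum R (\<lambda>i. c i \<otimes>\<^bsub>R\<^esub> M i j) I = \<zero>\<^bsub>R\<^esub> \<Longrightarrow> i \<in> I \<Longrightarrow> c i = \<zero>\<^bsub>R\<^esub>"
  unfolding rows_independent_def by blast

lemma not_rows_independentE:
  assumes "\<not> rows_independent R K I J M"
  obtains c i where "\<forall>i\<in>I. c i \<in> K" "\<forall>j\<in>J. finsum R (\<lambda>i. c i \<otimes>\<^bsub>R\<^esub> M i j) I = \<zero>\<^bsub>R\<^esub>"
    "i \<in> I" "c i \<noteq> \<zero>\<^bsub>R\<^esub>"
  using assms unfolding rows_independent_def by blast

lemma exists_maximal_rows_independent:
  assumes "finite Rs"
  obtains I0 where "I0 \<subseteq> Rs" "rows_independent R K I0 J M"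
    "\<And>r. r \<in> Rs - I0 \<Longrightarrow> \<not> rows_independent R K (insert r I0) J M"
proof -
  let ?indep = "\<lambda>I. I \<subseteq> Rs \<and> rows_independent R K I J M"
  have "?indep {}" by (simp add: rows_independent_def)
  moreover have "\<forall>I. ?indep I \<longrightarrow> card I < Suc (card Rs)"
    using assms by (simp add: card_mono less_Suc_eq_le)
  ultimately have "\<exists>I0. ?indep I0 \<and> (\<forall>I. ?indep I \<longrightarrow> card I \<le> card I0)"
    by (rule Lattices_Big.ex_has_greatest_nat)
  then obtain I0 where I0: "?indep I0" and maximal: "\<forall>I. ?indep I \<longrightarrow> card I \<le> card I0"
    by blast
  have "\<not> rows_independent R K (insert r I0) J M" if "r \<in> Rs - I0" for r
    using maximal[rule_format, of "insert r I0"] I0 that finite_subset[OF _ assms] by auto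
  with I0 show ?thesis using that by blast
qed

lemma (in ring) rows_independent_drop_zero_column:
  assumes "K \<subseteq> carrier R" "\<And>i. i \<in> I \<Longrightarrow> M i y = \<zero>"
    and "rows_independent R K I (insert y J) M"
  shows "rows_independent R K I J M"
proof -
  have "(\<Oplus>i\<in>I. c i \<otimes> M i y) = \<zero>" if "\<forall>i\<in>I. c i \<in> K" for c
    using assms that by (intro add.finprod_one_eqI) auto
  with assms(3) show ?thesis by (auto simp: rows_independent_def)
qed

lemma (in ring) rows_independent_subset:
  assumes K: "subring K R" and "finite I" "I' \<subseteq> I"
    and M: "\<And>i j. i \<in> I \<Longrightarrow> j \<in> J \<Longrightarrow> M i j \<in> carrier R"
    and indep: "rows_independent R K I J M"
  shows "rows_independent R K I' J M"
  unfolding rows_independent_def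
proof (intro allI impI ballI)
  fix c i assume c: "\<forall>i\<in>I'. c i \<in> K" and sums: "\<forall>j\<in>J. (\<Oplus>i\<in>I'. c i \<otimes> M i j) = \<zero>"
    and "i \<in> I'"
  define c' where "c' i = (if i \<in> I' then c i else \<zero>)" for i
  have c'K: "\<forall>i\<in>I. c' i \<in> K"
    using c subringE(2)[OF K] by (simp add: c'_def)
  have "(\<Oplus>i\<in>I. c' i \<otimes> M i j) = \<zero>" if "j \<in> J" for j
  proof -
    have "(\<Oplus>i\<in>I'. c i \<otimes> M i j) = (\<Oplus>i\<in>I. c' i \<otimes> M i j)"
      using assms c that subringE(1)[OF K]
      by (intro add.finprod_mono_neutral_cong_left) (auto simp: c'_def subset_iff)
    with sums that show ?thesis by simp
  qed
  then have "c' i = \<zero>"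
    using rows_independentD[OF indep c'K] \<open>i \<in> I'\<close> \<open>I' \<subseteq> I\<close> by blast
  with \<open>i \<in> I'\<close> show "c i = \<zero>" by (simp add: c'_def)
qed

context domain
begin

lemma not_rows_independent_pivot:
  assumes K: "subring K R" and fin: "finite I" and i0: "i0 \<in> I" "M i0 y \<noteq> \<zero>"
    and M: "\<And>i j. i \<in> I \<Longrightarrow> j \<in> insert y J \<Longrightarrow> M i j \<in> K"
    and dep: "\<not> rows_independent R K (I - {i0}) J (\<lambda>i j. M i j \<otimes> M i0 y \<ominus> M i y \<otimes> M i0 j)"
  shows "\<not> rows_independent R K I (insert y J) M"
proof -
  note sub = subringE[OF K]
  define I' where "I' = I - {i0}"
  define M' where "M' i j = M i j \<otimes> M i0 y \<ominus> M i y \<otimes> M i0 j" for i j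
  have I: "I = insert i0 I'" "i0 \<notin> I'" "finite I'"
    using i0 fin by (auto simp: I'_def)
  have MR: "M i j \<in> carrier R" if "i \<in> I" "j \<in> insert y J" for i j
    using M[OF that] sub(1) by blast
  obtain c' i' where c': "\<forall>i\<in>I'. c' i \<in> K" "\<forall>j\<in>J. (\<Oplus>i\<in>I'. c' i \<otimes> M' i j) = \<zero>"
    and i': "i' \<in> I'" "c' i' \<noteq> \<zero>"
    using dep unfolding I'_def[symmetric] M'_def[abs_def] by (rule not_rows_independentE)
  with sub(1) have c'R: "c' i \<in> carrier R" if "i \<in> I'" for i
    using that by blast
  define c where "c = (\<lambda>i. c' i \<otimes> M i0 y)(i0 := \<ominus> (\<Oplus>i\<in>I'. c' i \<otimes> M i y))"
  have "(\<Oplus>i\<in>I. c i \<otimes> M i j) = (\<Oplus>i\<in>I'. c' i \<otimes> M' i j)" if "j \<in> insert y J" for j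
    unfolding c_def M'_def I(1) using I c'R MR i0 that
    by (intro finsum_row_elimination) auto
  moreover have "(\<Oplus>i\<in>I'. c' i \<otimes> M' i y) = \<zero>"
    using c'R MR I(1) by (intro add.finprod_one_eqI) (simp add: M'_def a_minus_def r_neg)
  ultimately have "\<forall>j\<in>insert y J. (\<Oplus>i\<in>I. c i \<otimes> M i j) = \<zero>"
    using c' by auto
  moreover have "(\<Oplus>i\<in>I'. c' i \<otimes> M i y) \<in> K"
    using c' sub M I by (intro finsum_in_subring[OF K I(3)]) auto
  then have "\<forall>i\<in>I. c i \<in> K"
    using c' sub M i0 I by (auto simp: c_def)
  moreover have "c i' \<noteq> \<zero>"
    using i' I(2) c'R MR i0 by (auto simp: c_def integral_iff)
  ultimately show ?thesis
    using i' I by (auto simp: rows_independent_def)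
qed

lemma not_rows_independent_if_card_lt:
  assumes K: "subring K R" and "finite J"
  shows "finite I \<Longrightarrow> card J < card I \<Longrightarrow> (\<And>i j. i \<in> I \<Longrightarrow> j \<in> J \<Longrightarrow> M i j \<in> K) \<Longrightarrow>
    \<not> rows_independent R K I J M"
  using \<open>finite J\<close>
proof (induction J arbitrary: I M rule: finite_induct)
  case empty
  then obtain i where "i \<in> I" by fastforce
  then show ?case
    using subringE(3)[OF K] by (auto simp: rows_independent_def intro!: exI[of _ "\<lambda>_. \<one>"])
next
  case (insert y J)
  show ?case
  proof (cases "\<forall>i\<in>I. M i y = \<zero>")
    case True
    with insert.prems insert.hyps have "\<not> rows_independent R K I J M"
      by (intro insert.IH) auto
    with True show ?thesis
      using rows_independent_drop_zero_column[OF subringE(1)[OF K], of I M y J] by blast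
  next
    case False
    then obtain i0 where i0: "i0 \<in> I" "M i0 y \<noteq> \<zero>" by blast
    have "\<not> rows_independent R K (I - {i0}) J (\<lambda>i j. M i j \<otimes> M i0 y \<ominus> M i y \<otimes> M i0 j)"
      using insert i0 subringE[OF K] by (intro insert.IH) (auto simp: a_minus_def)
    then show ?thesis
      using insert.prems i0 by (intro not_rows_independent_pivot[OF K]) auto
  qed
qed

corollary card_le_if_rows_independent:
  assumes "subring K R" "finite I" "finite J" "\<And>i j. i \<in> I \<Longrightarrow> j \<in> J \<Longrightarrow> M i j \<in> K"
    and "rows_independent R K I J M"
  shows "card I \<le> card J"
  using not_rows_independent_if_card_lt[OF assms(1,3,2) _ assms(4)] assms(5) by force

lemma row_annihilated_if_dependent:
  assumes K: "subring K R" and fin: "finite I" "finite J" "r \<notin> I"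
    and M: "\<And>i j. i \<in> insert r I \<Longrightarrow> j \<in> J \<Longrightarrow> M i j \<in> K"
    and indep: "rows_independent R K I J M"
    and dep: "\<not> rows_independent R K (insert r I) J M"
    and d: "\<And>j. j \<in> J \<Longrightarrow> d j \<in> carrier R"
    and annihilated: "\<And>i. i \<in> I \<Longrightarrow> (\<Oplus>j\<in>J. d j \<otimes> M i j) = \<zero>"
  shows "(\<Oplus>j\<in>J. d j \<otimes> M r j) = \<zero>"
proof -
  have KR: "K \<subseteq> carrier R" using subringE(1)[OF K] .
  obtain c i0 where c: "\<forall>i\<in>insert r I. c i \<in> K"
    and rel: "\<forall>j\<in>J. (\<Oplus>i\<in>insert r I. c i \<otimes> M i j) = \<zero>"
    and i0: "i0 \<in> insert r I" "c i0 \<noteq> \<zero>"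
    using dep by (rule not_rows_independentE)
  have cr: "c r \<noteq> \<zero>"
  proof
    assume "c r = \<zero>"
    with rel M KR fin c have "\<forall>j\<in>J. (\<Oplus>i\<in>I. c i \<otimes> M i j) = \<zero>"
      by (auto simp: subset_iff Pi_def)
    moreover have "i0 \<in> I" using i0 \<open>c r = \<zero>\<close> by auto
    ultimately have "c i0 = \<zero>"
      using c by (intro rows_independentD[OF indep]) auto
    with i0 show False by simp
  qed
  have "(\<Oplus>i\<in>I. c i \<otimes> (\<Oplus>j\<in>J. d j \<otimes> M i j)) = \<zero>"
    using annihilated c KR by (intro add.finprod_one_eqI) auto
  then have "c r \<otimes> (\<Oplus>j\<in>J. d j \<otimes> M r j) = (\<Oplus>i\<in>insert r I. c i \<otimes> (\<Oplus>j\<in>J. d j \<otimes> M i j))"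
    using fin c d M KR by (auto simp: subset_iff Pi_def intro!: finsum_closed)
  also have "\<dots> = (\<Oplus>j\<in>J. d j \<otimes> (\<Oplus>i\<in>insert r I. c i \<otimes> M i j))"
    using fin c d M KR by (intro finsum_bilinear_swap[symmetric]) auto
  also have "\<dots> = \<zero>"
    using rel d by (intro add.finprod_one_eqI) simp
  finally show ?thesis
    using cr c d M KR fin by (auto simp: integral_iff subset_iff)
qed

lemma exists_rows_independent_if_columns_independent:
  assumes K: "subring K R" and fin: "finite Rs" "finite Cs"
    and M: "\<And>r j. r \<in> Rs \<Longrightarrow> j \<in> Cs \<Longrightarrow> M r j \<in> K"
    and cols: "rows_independent R K Cs Rs (\<lambda>j r. M r j)"
  shows "\<exists>I\<subseteq>Rs. card I = card Cs \<and> rows_independent R K I Cs M"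
proof -
  have KR: "K \<subseteq> carrier R" using subringE(1)[OF K] .
  obtain I0 where I0: "I0 \<subseteq> Rs" "rows_independent R K I0 Cs M"
    and maximal: "\<And>r. r \<in> Rs - I0 \<Longrightarrow> \<not> rows_independent R K (insert r I0) Cs M"
    using exists_maximal_rows_independent[OF fin(1), where R = R and K = K and J = Cs and M = M]
    by blast
  have finI0: "finite I0" using I0(1) fin(1) by (rule finite_subset)
  have "card Cs \<le> card I0"
  proof (rule ccontr)
    assume "\<not> card Cs \<le> card I0"
    then have "\<not> rows_independent R K Cs I0 (\<lambda>j r. M r j)"
      using M I0(1) by (intro not_rows_independent_if_card_lt[OF K finI0 fin(2)]) auto
    then obtain d j0 where d: "\<forall>j\<in>Cs. d j \<in> K" "\<forall>i\<in>I0. (\<Oplus>j\<in>Cs. d j \<otimes> M i j) = \<zero>"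
      and j0: "j0 \<in> Cs" "d j0 \<noteq> \<zero>"
      by (rule not_rows_independentE)
    have "(\<Oplus>j\<in>Cs. d j \<otimes> M r j) = \<zero>" if r: "r \<in> Rs" for r
    proof (cases "r \<in> I0")
      case False
      show ?thesis
        by (rule row_annihilated_if_dependent[OF K finI0 fin(2) False _ I0(2) maximal])
          (use d M KR r I0(1) False in auto)
    qed (use d in auto)
    then have "d j0 = \<zero>"
      using d(1) j0(1) by (intro rows_independentD[OF cols]) auto
    with j0(2) show False ..
  qed
  then obtain I where "I \<subseteq> I0" "card I = card Cs"
    by (meson obtain_subset_with_card_n)
  moreover have "rows_independent R K I Cs M"
    by (rule rows_independent_subset[OF K finI0 \<open>I \<subseteq> I0\<close> _ I0(2)]) (use M KR I0(1) in blast)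
  ultimately show ?thesis using I0(1) by blast
qed

theorem mat_rank_over_eq_min:
  assumes K: "subring K R" and fin: "finite Rs"
    and M: "\<And>r l. r \<in> Rs \<Longrightarrow> l < N \<Longrightarrow> M r l \<in> K"
    and cols: "rows_independent R K {..<min (card Rs) N} Rs (\<lambda>l r. M r l)"
  shows "mat_rank_over R K Rs N M = min (card Rs) N"
  unfolding mat_rank_over_def
proof (rule Max_eqI)
  let ?s = "min (card Rs) N"
  show "finite {card I |I. I \<subseteq> Rs \<and> rows_indep_over R K I N M}"
    using fin by auto
  show "n \<le> ?s" if n: "n \<in> {card I |I. I \<subseteq> Rs \<and> rows_indep_over R K I N M}" for n
  proof -
    obtain I where I: "n = card I" "I \<subseteq> Rs" "rows_independent R K I {..<N} M"
      using n unfolding rows_indep_over_iff_rows_independent by blast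
    have "card I \<le> card Rs" using I(2) fin by (rule card_mono[rotated])
    moreover have "card I \<le> N"
      using card_le_if_rows_independent[OF K finite_subset[OF I(2) fin] _ _ I(3)] I(2) M by auto
    ultimately show ?thesis using I(1) by simp
  qed
  obtain I where I: "I \<subseteq> Rs" "card I = ?s" "rows_independent R K I {..<?s} M"
    using exists_rows_independent_if_columns_independent[OF K fin _ _ cols] M by auto
  from I(3) have "rows_independent R K I {..<N} M"
    by (rule rows_independent_mono_columns) auto
  with I(1,2) show "?s \<in> {card I |I. I \<subseteq> Rs \<and> rows_indep_over R K I N M}"
    unfolding rows_indep_over_iff_rows_independent by (intro CollectI exI[of _ I]) simp
qed

end

lemma (in ring) eval_rev_map_upt:
  assumes "x \<in> carrier R" "\<And>l. l < s \<Longrightarrow> d l \<in> carrier R"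
  shows "eval (rev (map d [0..<s])) x = (\<Oplus>l\<in>{..<s}. d l \<otimes> x [^] l)"
  using assms(2)
proof (induction s)
  case (Suc s)
  then show ?case
    using assms(1) by (simp add: lessThan_Suc finsum_insert Pi_def)
qed simp

lemma (in ring) normalize_eq_Nil_imp_zero:
  assumes "normalize p = []"
  shows "set p \<subseteq> {\<zero>}"
proof -
  have "p = replicate (length p) \<zero>"
    using normalize_trick[of p] assms by simp
  then show ?thesis
    by (metis set_replicate_conv_if empty_subsetI subset_refl)
qed

context domain
begin

lemma Irr_eqI:
  assumes "subfield K R" "x \<in> carrier R" "(algebraic over K) x"
    and "f \<in> carrier (K[X])" "pirreducible K f" "eval f x = \<zero>" "lead_coeff f = \<one>"
  shows "Irr K x = f"
  unfolding Irr_def using the1_equality[OF minimal_polynomial_is_unique[OF assms(1-3)]] assms(4-7) by blast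

lemma eval_Irr_neq_zero:
  assumes K: "subfield K R"
    and x: "x \<in> carrier R" "(algebraic over K) x" and y: "y \<in> carrier R" "(algebraic over K) y"
    and "Irr K x \<noteq> Irr K y"
  shows "eval (Irr K x) y \<noteq> \<zero>"
proof
  assume "eval (Irr K x) y = \<zero>"
  then have "Irr K y = Irr K x"
    using Irr_eqI[OF K y] IrrE[OF K x] by blast
  with assms(6) show False by simp
qed

lemma sum_degree_Irr_le_degree:
  assumes K: "subfield K R" and "finite S"
    and u: "\<And>i. i \<in> S \<Longrightarrow> u i \<in> carrier R \<and> (algebraic over K) (u i)"
    and distinct: "inj_on (\<lambda>i. Irr K (u i)) S"
    and p: "p \<in> carrier (K[X])" "p \<noteq> []" "\<And>i. i \<in> S \<Longrightarrow> eval p (u i) = \<zero>"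
  shows "(\<Sum>i\<in>S. degree (Irr K (u i))) \<le> degree p"
  using \<open>finite S\<close> u distinct p
proof (induction S arbitrary: p rule: finite_induct)
  case (insert a S)
  have sub: "subring K R" using subfieldE(1)[OF K] .
  have ua: "u a \<in> carrier R" "(algebraic over K) (u a)" using insert.prems(1) by auto
  note Irr_a = IrrE[OF K ua]
  have "Irr K (u a) divides\<^bsub>K[X]\<^esub> p"
    using Irr_minimal[OF K ua insert.prems(3)] insert.prems(5)
      pdivides_iff_shell[OF K Irr_a(1) insert.prems(3)] by auto
  then obtain q where q: "q \<in> carrier (K[X])" and pq: "p = Irr K (u a) \<otimes>\<^bsub>K[X]\<^esub> q"
    by (auto elim!: dividesE)
  have "Irr K (u a) \<noteq> []"
    using Irr_a(2) by (auto simp: ring_irreducible_def univ_poly_zero)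
  moreover have "q \<noteq> []"
    using insert.prems(4) pq poly_mult_zero(2)[OF polynomial_in_carrier[OF sub]] Irr_a(1)
    by (auto simp: univ_poly_mult univ_poly_carrier[symmetric])
  ultimately have deg: "degree p = degree (Irr K (u a)) + degree q"
    using poly_mult_degree_eq[OF sub] Irr_a(1) q pq by (auto simp: univ_poly_carrier univ_poly_mult)
  have "eval q (u i) = \<zero>" if i: "i \<in> S" for i
  proof -
    have ui: "u i \<in> carrier R" "(algebraic over K) (u i)" using insert.prems(1) i by auto
    note eval_hom = ring_hom_memE[OF eval_is_hom[OF sub ui(1)]]
    have "Irr K (u a) \<noteq> Irr K (u i)"
      using insert.prems(2) i insert.hyps(2) by (metis inj_onD insertI1 insertI2)
    then have "eval (Irr K (u a)) (u i) \<noteq> \<zero>"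
      by (rule eval_Irr_neq_zero[OF K ua ui])
    moreover have "eval (Irr K (u a)) (u i) \<otimes> eval q (u i) = \<zero>"
      using eval_hom(2)[OF Irr_a(1) q] pq insert.prems(5) i by simp
    ultimately show ?thesis
      using eval_hom(1)[OF Irr_a(1)] eval_hom(1)[OF q] by (simp add: integral_iff)
  qed
  with insert.IH[OF _ _ q \<open>q \<noteq> []\<close>] insert.prems(1,2) have "(\<Sum>i\<in>S. degree (Irr K (u i))) \<le> degree q"
    by auto
  with insert.hyps deg show ?case by simp
qed simp

end

lemma (in domain) coeffs_zero_if_vanishing_at_roots:
  assumes K: "subfield K R" and "finite S"
    and u: "\<And>i. i \<in> S \<Longrightarrow> u i \<in> carrier R \<and> (algebraic over K) (u i)"
    and distinct: "inj_on (\<lambda>i. Irr K (u i)) S"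
    and s: "s \<le> (\<Sum>i\<in>S. degree (Irr K (u i)))"
    and d: "\<And>l. l < s \<Longrightarrow> d l \<in> K"
    and vanishing: "\<And>i. i \<in> S \<Longrightarrow> (\<Oplus>l\<in>{..<s}. d l \<otimes> u i [^] l) = \<zero>"
  shows "\<forall>l<s. d l = \<zero>"
proof -
  have KR: "K \<subseteq> carrier R" using subfieldE(3)[OF K] .
  \<comment> \<open>polynomials are coefficient lists with the leading coefficient first\<close>
  define p where "p = normalize (rev (map d [0..<s]))"
  have p: "p \<in> carrier (K[X])"
    unfolding p_def univ_poly_carrier[symmetric] using d by (intro normalize_gives_polynomial) auto
  have roots: "eval p (u i) = \<zero>" if "i \<in> S" for i
  proof -
    have "set (rev (map d [0..<s])) \<subseteq> carrier R" using d KR by auto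
    then show ?thesis
      unfolding p_def using u[OF that] d KR vanishing[OF that]
      by (simp add: eval_normalize eval_rev_map_upt subset_iff)
  qed
  have "p = []"
  proof (rule ccontr)
    assume "p \<noteq> []"
    with sum_degree_Irr_le_degree[OF K \<open>finite S\<close> u distinct p _ roots]
    have "(\<Sum>i\<in>S. degree (Irr K (u i))) \<le> length p - 1" by simp
    moreover have "length p \<le> s"
      unfolding p_def using normalize_length_le[of "rev (map d [0..<s])"] by simp
    ultimately show False
      using s \<open>p \<noteq> []\<close> by (cases p) auto
  qed
  then have "set (rev (map d [0..<s])) \<subseteq> {\<zero>}"
    unfolding p_def by (rule normalize_eq_Nil_imp_zero)
  then show ?thesis by (auto simp: image_subset_iff)
qed

lemma (in field) dim_generate_field_insert:
  assumes K: "subfield K R" and x: "x \<in> carrier R" "(algebraic over K) x"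
  shows "dim K (generate_field R (insert x K)) = degree (Irr K x)"
proof -
  have "simple_extension K x = generate_field R (insert x K)"
  proof (rule generate_fieldI)
    show "insert x K \<subseteq> carrier R"
      using x subfieldE(3)[OF K] by auto
    show "subfield (simple_extension K x) R"
      using simple_extension_is_subfield[OF K x(1)] x(2) by simp
    show "insert x K \<subseteq> simple_extension K x"
      using simple_extension_incl[OF subfieldE(3)[OF K] x(1)] simple_extension_mem[OF subfieldE(1)[OF K] x(1)]
      by auto
    show "simple_extension K x \<subseteq> K'" if "subfield K' R" "insert x K \<subseteq> K'" for K'
      using simple_extension_subring_incl[OF subfieldE(1)[OF that(1)]] that(2) by auto
  qed
  then show ?thesis
    using simple_extension_dim[OF assms] by (simp add: over_def)
qed

lemma (in domain) power_coordinate_columns_independent: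
  fixes k :: "nat \<Rightarrow> nat"
  assumes K: "subfield K R"
    and u: "\<And>i. i < m \<Longrightarrow> u i \<in> carrier R \<and> (algebraic over K) (u i)"
    and distinct: "inj_on (\<lambda>i. Irr K (u i)) {..<m}"
    and s: "s \<le> N" "s \<le> (\<Sum>i<m. degree (Irr K (u i)))"
    and A_in: "\<And>i j l. i < m \<Longrightarrow> j < k i \<Longrightarrow> l < N \<Longrightarrow> A i j l \<in> K"
    and coords: "\<And>i l. i < m \<Longrightarrow> l < N \<Longrightarrow> u i [^] l = (\<Oplus>j\<in>{..<k i}. A i j l \<otimes> u i [^] j)"
  shows "rows_independent R K {..<s} {(i, j). i < m \<and> j < k i} (\<lambda>l (i, j). A i j l)"
  unfolding rows_independent_def
proof (intro allI impI)
  fix d assume d: "\<forall>l\<in>{..<s}. d l \<in> K"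
    and columns: "\<forall>r\<in>{(i, j). i < m \<and> j < k i}. (\<Oplus>l\<in>{..<s}. d l \<otimes> (case r of (i, j) \<Rightarrow> A i j l)) = \<zero>"
  have KR: "K \<subseteq> carrier R" using subfieldE(3)[OF K] .
  have "(\<Oplus>l\<in>{..<s}. d l \<otimes> u i [^] l) = \<zero>" if i: "i < m" for i
  proof -
    have "(\<Oplus>l\<in>{..<s}. d l \<otimes> u i [^] l) = (\<Oplus>j\<in>{..<k i}. u i [^] j \<otimes> (\<Oplus>l\<in>{..<s}. d l \<otimes> A i j l))"
      using u[OF i] coords[OF i] s(1) A_in[OF i] d KR by (intro finsum_pow_coordinates) auto
    also have "\<dots> = \<zero>"
      using columns i u[OF i] by (intro add.finprod_one_eqI) auto
    finally show ?thesis .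
  qed
  then have "\<forall>l<s. d l = \<zero>"
    using d u distinct s(2) by (intro coeffs_zero_if_vanishing_at_roots[OF K, of "{..<m}" u]) auto
  then show "\<forall>l\<in>{..<s}. d l = \<zero>" by simp
qed

theorem lemma2p2:
  fixes L :: "('a, 'b) ring_scheme" (structure)
    and K :: "'a set" and q N m :: nat
    and u :: "nat \<Rightarrow> 'a"
    and k :: "nat \<Rightarrow> nat"
    and A :: "nat \<Rightarrow> nat \<Rightarrow> nat \<Rightarrow> 'a"
  assumes closure: "algebraic_closure L K"
    and finK: "finite K" and cardK: "card K = q"
    and N_pos: "N > 0" and m_pos: "m > 0"
    and u_in: "\<And>i. i < m \<Longrightarrow> u i \<in> carrier L"
    and distinct_minpoly: "\<And>i j. i < m \<Longrightarrow> j < m \<Longrightarrow> i \<noteq> j \<Longrightarrow>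
            ring.Irr L K (u i) \<noteq> ring.Irr L K (u j)"
    and k_def: "\<And>i. i < m \<Longrightarrow> k i = ring.dim L K (generate_field L (insert (u i) K))"
    and A_in: "\<And>i j l. i < m \<Longrightarrow> j < k i \<Longrightarrow> l < N \<Longrightarrow> A i j l \<in> K"
    and A_def: "\<And>i l. i < m \<Longrightarrow> l < N \<Longrightarrow>
            u i [^] l = (\<Oplus>j\<in>{..<k i}. A i j l \<otimes> u i [^] j)"
  shows "mat_rank_over L K {(i, j). i < m \<and> j < k i} N (\<lambda>(i, j) l. A i j l)
           = min (\<Sum>i<m. k i) N"
proof -
  interpret algebraic_closure L K by (rule closure)
  have K: "subfield K L" by (rule subfield_axioms)
  have u: "u i \<in> carrier L \<and> (algebraic over K) (u i)" if "i < m" for i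
    using u_in[OF that] algebraic_extension by blast
  have k: "k i = degree (Irr K (u i))" if "i < m" for i
    using k_def[OF that] dim_generate_field_insert[OF K] u[OF that] by simp
  have "inj_on (\<lambda>i. Irr K (u i)) {..<m}"
    using distinct_minpoly by (auto simp: inj_on_def)
  moreover have "(\<Sum>i<m. k i) = (\<Sum>i<m. degree (Irr K (u i)))"
    using k by (intro sum.cong) auto
  ultimately have "rows_independent L K {..<min (\<Sum>i<m. k i) N} {(i, j). i < m \<and> j < k i} (\<lambda>l (i, j). A i j l)"
    using u A_in A_def by (intro power_coordinate_columns_independent[OF K, where N = N]) auto
  moreover have "{(i, j). i < m \<and> j < k i} = Sigma {..<m} (\<lambda>i. {..<k i})" by auto
  ultimately show ?thesis
    using mat_rank_over_eq_min[OF subfieldE(1)[OF K], of "{(i, j). i < m \<and> j < k i}" N "\<lambda>(i, j) l. A i j l"] A_in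
    by (auto simp: case_prod_unfold)
qed

end
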